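(* Let $M$ be a gasket automaton satisfying the $\gamma$-isolated condition, let $(\tau,\kappa)\in\mathcal P_{\alpha\gamma}$ with $\kappa$ double-maximal in $M$, and let $M'$ be the one-step simplification of $M$ with respect to $(\tau,\kappa)$. Then (i) both $\tau$ and $\kappa$ are double-maximal in $M'$, and $\kappa$ is $\alpha\gamma$-isolated in $M'$; (ii) $\kappa\notin\{\alpha,\gamma\}$.
   Context: $\Sigma=\{1,\dots,N\}$. Triangle automaton: $\alpha,\beta,\gamma$ distinct elements of $\Sigma\cup\{-1,-2,-3\}$; states $S_{uv}$ ($u\ne v\in\{\alpha,\beta,\gamma\}$), $Id$, $Exit$; input alphabet $\Sigma^2$; transition $\delta$ with $\delta(Id,(i,j))=Id$ iff $i=j$; $\delta(Id,(i,j))=S_{uv}\Rightarrow\delta(Id,(j,i))=S_{vu}$; $\delta(S_{uv},(i,j))=S_{uv}$ if $(i,j)=(v,u)$, else $Exit$. $\mathcal P_{uv}=\{(i,j):\delta(Id,(i,j))=S_{uv}\}$; a triangle automaton is determined by $\mathcal P_{\alpha\beta},\mathcal P_{\alpha\gamma},\mathcal P_{\beta\gamma}$. $i\triangleleft_{uv}j$ iff $(i,j)\in\mathcal P_{uv}$ (iff $j\triangleleft_{vu}i$); $j$ is $uv$-minimal if no $i\triangleleft_{uv}j$, $uv$-maximal if no $j\triangleleft_{uv}k$, $uv$-isolated if both; double-maximal means $\alpha\gamma$-maximal and $\beta\gamma$-maximal. Gasket automaton: (Uniqueness) $i\triangleleft_{uv}j,i\triangleleft_{uv}j'\Rightarrow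 j=j'$; (Gathering) any two of $a\triangleleft_{\alpha\gamma}c$, $a\triangleleft_{\beta\gamma}b$, $b\triangleleft_{\alpha\beta}c$ imply the third; (Boundary) if $\alpha\in\Sigma$ it is $\alpha\gamma$- and $\alpha\beta$-minimal; if $\beta\in\Sigma$ it is $\beta\gamma$- and $\beta\alpha$-minimal; if $\gamma\in\Sigma$ it is $\gamma\alpha$- and $\gamma\beta$-minimal. $\gamma$-isolated condition: $\alpha,\beta,\gamma\in\Sigma$; $(\Sigma,\mathcal P_{\alpha\gamma}\cup\mathcal P_{\beta\gamma})$ has no directed cycle; $\gamma$ is $\alpha\gamma$-, $\beta\gamma$- and $\alpha\beta$-isolated. One-step simplification with respect to $(\tau,\kappa)\in\mathcal P_{\alpha\gamma}$: if $\kappa$ has no $\alpha\beta$-predecessor, $\mathcal P'_{\alpha\beta}=\mathcal P_{\alpha\beta}$, $\mathcal P'_{\alpha\gamma}=\mathcal P_{\alpha\gamma}\setminus\{(\tau,\kappa)\}$, $\mathcal P'_{\beta\gamma}=\mathcal P_{\beta\gamma}$; if $\lambda\triangleleft_{\alpha\beta}\kappa$, then $\mathcal P'_{\alpha\beta}=\mathcal P_{\alpha\beta}$, $\mathcal P'_{\alpha\gamma}=\mathcal P_{\alpha\gamma}\setminus\{(\tau,\kappa)\}$, $\mathcal P'_{\beta\gamma}=\mathcal P_{\beta\gamma}\setminus\{(\tau,\lambda)\}$. $M'$ is the triangle automaton determined by $\mathcal P'_{\alpha\beta},\mathcal P'_{\alpha\gamma},\mathcal P'_{\beta\gamma}$.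 *)

theory Defs
  imports Main
begin

text \<open>The automaton is represented by the data that determines it: the distinguished
  labels alpha, beta, gamma and the three relations P_ab, P_ag, P_bg.
  The transition function delta is determined by these relations:
  delta(Id,(i,j)) = S_uv iff (i,j) in P_uv, with P_vu the converse of P_uv,
  delta(Id,(i,i)) = Id, and all other transitions go to Exit.\<close>

record tri_aut =
  N :: nat
  alpha :: int
  beta :: int
  gamma :: int
  Pab :: "(int \<times> int) set"
  Pag :: "(int \<times> int) set"
  Pbg :: "(int \<times> int) set"

datatype vtx = A | B | C

definition Sigma :: "tri_aut \<Rightarrow> int set" where
  "Sigma M = {1..int (N M)}"

fun val :: "tri_aut \<Rightarrow> vtx \<Rightarrow> int" where
  "val M A = alpha M"
| "val M B = beta M"
| "val M C = gamma M"

fun rel :: "tri_aut \<Rightarrow> vtx \<Rightarrow> vtx \<Rightarrow> (int \<times> int) set" where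
  "rel M A B = Pab M"
| "rel M B A = converse (Pab M)"
| "rel M A C = Pag M"
| "rel M C A = converse (Pag M)"
| "rel M B C = Pbg M"
| "rel M C B = converse (Pbg M)"
| "rel M A A = {}"
| "rel M B B = {}"
| "rel M C C = {}"

definition prec :: "tri_aut \<Rightarrow> vtx \<Rightarrow> vtx \<Rightarrow> int \<Rightarrow> int \<Rightarrow> bool" where
  "prec M u v i j \<longleftrightarrow> (i, j) \<in> rel M u v"

text \<open>Well-formedness: the relations come from a (deterministic) transition function
  delta on inputs Sigma x Sigma with the stated properties.\<close>
definition triangle_automaton :: "tri_aut \<Rightarrow> bool" where
  "triangle_automaton M \<longleftrightarrow>
     alpha M \<noteq> beta M \<and> alpha M \<noteq> gamma M \<and> beta M \<noteq> gamma M \<and>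
     (\<forall>u. val M u \<in> Sigma M \<union> {-1, -2, -3}) \<and>
     Pab M \<subseteq> Sigma M \<times> Sigma M \<and> Pag M \<subseteq> Sigma M \<times> Sigma M \<and> Pbg M \<subseteq> Sigma M \<times> Sigma M \<and>
     (\<forall>u v i. (i, i) \<notin> rel M u v) \<and>
     (\<forall>u v u' v'. u \<noteq> v \<longrightarrow> u' \<noteq> v' \<longrightarrow> (u, v) \<noteq> (u', v') \<longrightarrow> rel M u v \<inter> rel M u' v' = {})"

definition minimal :: "tri_aut \<Rightarrow> vtx \<Rightarrow> vtx \<Rightarrow> int \<Rightarrow> bool" where
  "minimal M u v j \<longleftrightarrow> \<not> (\<exists>i. prec M u v i j)"

definition maximal :: "tri_aut \<Rightarrow> vtx \<Rightarrow> vtx \<Rightarrow> int \<Rightarrow> bool" where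
  "maximal M u v j \<longleftrightarrow> \<not> (\<exists>k. prec M u v j k)"

definition isolated :: "tri_aut \<Rightarrow> vtx \<Rightarrow> vtx \<Rightarrow> int \<Rightarrow> bool" where
  "isolated M u v j \<longleftrightarrow> minimal M u v j \<and> maximal M u v j"

definition double_maximal :: "tri_aut \<Rightarrow> int \<Rightarrow> bool" where
  "double_maximal M j \<longleftrightarrow> maximal M A C j \<and> maximal M B C j"

definition gasket_automaton :: "tri_aut \<Rightarrow> bool" where
  "gasket_automaton M \<longleftrightarrow>
     triangle_automaton M \<and>
     \<comment> \<open>Uniqueness\<close>
     (\<forall>u v i j j'. u \<noteq> v \<longrightarrow> prec M u v i j \<longrightarrow> prec M u v i j' \<longrightarrow> j = j') \<and>
     \<comment> \<open>Gathering\<close>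
     (\<forall>a b c.
        (prec M A C a c \<and> prec M B C a b \<longrightarrow> prec M A B b c) \<and>
        (prec M A C a c \<and> prec M A B b c \<longrightarrow> prec M B C a b) \<and>
        (prec M B C a b \<and> prec M A B b c \<longrightarrow> prec M A C a c)) \<and>
     \<comment> \<open>Boundary\<close>
     (alpha M \<in> Sigma M \<longrightarrow> minimal M A C (alpha M) \<and> minimal M A B (alpha M)) \<and>
     (beta M \<in> Sigma M \<longrightarrow> minimal M B C (beta M) \<and> minimal M B A (beta M)) \<and>
     (gamma M \<in> Sigma M \<longrightarrow> minimal M C A (gamma M) \<and> minimal M C B (gamma M))"

definition gamma_isolated_condition :: "tri_aut \<Rightarrow> bool" where
  "gamma_isolated_condition M \<longleftrightarrow>
     alpha M \<in> Sigma M \<and> beta M \<in> Sigma M \<and> gamma M \<in> Sigma M \<and>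
     acyclic (Pag M \<union> Pbg M) \<and>
     isolated M A C (gamma M) \<and> isolated M B C (gamma M) \<and> isolated M A B (gamma M)"

definition one_step_simp :: "tri_aut \<Rightarrow> int \<Rightarrow> int \<Rightarrow> tri_aut \<Rightarrow> bool" where
  "one_step_simp M tau kappa M' \<longleftrightarrow>
     ((\<not> (\<exists>l. prec M A B l kappa)) \<and>
        M' = M\<lparr>Pag := Pag M - {(tau, kappa)}\<rparr>) \<or>
     (\<exists>l. prec M A B l kappa \<and>
        M' = M\<lparr>Pag := Pag M - {(tau, kappa)}, Pbg := Pbg M - {(tau, l)}\<rparr>)"

end

theory Submission
  imports Defs
begin

text \<open>One-step simplification only deletes pairs, so maximality is inherited. By Uniqueness,
  \<open>\<kappa>\<close> is the only \<open>\<alpha>\<gamma>\<close>-successor of \<open>\<tau>\<close> and \<open>\<tau>\<close> the only \<open>\<alpha>\<gamma>\<close>-predecessor of \<open>\<kappa>\<close>;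
  by Gathering, every \<open>\<beta>\<gamma>\<close>-successor of \<open>\<tau>\<close> is an \<open>\<alpha>\<beta>\<close>-predecessor of \<open>\<kappa>\<close>, hence the
  unique one, and that pair is deleted as well. Finally \<open>\<kappa>\<close> has the \<open>\<alpha>\<gamma>\<close>-predecessor \<open>\<tau>\<close>,
  whereas \<open>\<alpha>\<close> (by Boundary) and \<open>\<gamma>\<close> (by the \<open>\<gamma>\<close>-isolated condition) are \<open>\<alpha>\<gamma>\<close>-minimal.\<close>

lemma gasket_prec_unique:
  assumes "gasket_automaton M" "u \<noteq> v" "prec M u v i j" "prec M u v i j'"
  shows "j = j'"
  using assms unfolding gasket_automaton_def by blast

lemma gasket_gather_A_B:
  assumes "gasket_automaton M" "prec M A C a c" "prec M B C a b"
  shows "prec M A B b c"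
  using assms unfolding gasket_automaton_def by blast

lemma gasket_minimal_A_C_alpha:
  assumes "gasket_automaton M" "alpha M \<in> Sigma M"
  shows "minimal M A C (alpha M)"
  using assms unfolding gasket_automaton_def by blast

lemma maximal_rel_antimono:
  assumes "maximal M u v j" "rel M' u v \<subseteq> rel M u v"
  shows "maximal M' u v j"
  using assms unfolding maximal_def prec_def by blast

lemma double_maximal_rel_antimono:
  assumes "double_maximal M j" "\<And>u v. rel M' u v \<subseteq> rel M u v"
  shows "double_maximal M' j"
  using assms maximal_rel_antimono unfolding double_maximal_def by blast

lemma one_step_simp_Pag:
  assumes "one_step_simp M tau kappa M'"
  shows "Pag M' = Pag M - {(tau, kappa)}"
  using assms unfolding one_step_simp_def by auto

lemma one_step_simp_rel_subset:
  assumes "one_step_simp M tau kappa M'"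
  shows "rel M' u v \<subseteq> rel M u v"
  using assms unfolding one_step_simp_def by (cases u; cases v) auto

lemma one_step_simp_maximal_B_C:
  assumes gasket: "gasket_automaton M"
    and tau_kappa: "(tau, kappa) \<in> Pag M"
    and step: "one_step_simp M tau kappa M'"
  shows "maximal M' B C tau"
  unfolding maximal_def
proof
  assume "\<exists>b. prec M' B C tau b"
  then obtain b where b: "(tau, b) \<in> Pbg M'"
    by (auto simp: prec_def)
  then have "(tau, b) \<in> Pbg M"
    using one_step_simp_rel_subset [OF step, of B C] by auto
  then have b_kappa: "(b, kappa) \<in> Pab M"
    using gasket_gather_A_B [OF gasket, of tau kappa b] tau_kappa by (simp add: prec_def)
  have "l = b" if "(l, kappa) \<in> Pab M" for l
    using gasket_prec_unique [OF gasket, of B A kappa] b_kappa that by (simp add: prec_def)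
  moreover obtain l where "(l, kappa) \<in> Pab M" "Pbg M' = Pbg M - {(tau, l)}"
    using step b_kappa unfolding one_step_simp_def prec_def by auto
  ultimately have "Pbg M' = Pbg M - {(tau, b)}"
    by blast
  with b show False
    by simp
qed

lemma one_step_simp_maximal_A_C:
  assumes gasket: "gasket_automaton M"
    and tau_kappa: "(tau, kappa) \<in> Pag M"
    and step: "one_step_simp M tau kappa M'"
  shows "maximal M' A C tau"
proof -
  have "k = kappa" if "(tau, k) \<in> Pag M" for k
    using gasket_prec_unique [OF gasket, of A C tau] tau_kappa that by (simp add: prec_def)
  then show ?thesis
    using one_step_simp_Pag [OF step] by (auto simp: maximal_def prec_def)
qed

lemma one_step_simp_minimal_A_C:
  assumes gasket: "gasket_automaton M"
    and tau_kappa: "(tau, kappa) \<in> Pag M"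
    and step: "one_step_simp M tau kappa M'"
  shows "minimal M' A C kappa"
proof -
  have "i = tau" if "(i, kappa) \<in> Pag M" for i
    using gasket_prec_unique [OF gasket, of C A kappa] tau_kappa that by (simp add: prec_def)
  then show ?thesis
    using one_step_simp_Pag [OF step] by (auto simp: minimal_def prec_def)
qed

theorem lemma5p4:
  assumes "gasket_automaton M"
    and "gamma_isolated_condition M"
    and "(tau, kappa) \<in> Pag M"
    and "double_maximal M kappa"
    and "one_step_simp M tau kappa M'"
  shows "double_maximal M' tau \<and> double_maximal M' kappa \<and> isolated M' A C kappa
         \<and> kappa \<notin> {alpha M, gamma M}"
proof -
  have "double_maximal M' tau"
    using one_step_simp_maximal_A_C [OF assms(1,3,5)] one_step_simp_maximal_B_C [OF assms(1,3,5)]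
    unfolding double_maximal_def by blast
  moreover have kappa_maximal: "double_maximal M' kappa"
    using double_maximal_rel_antimono [OF assms(4) one_step_simp_rel_subset [OF assms(5)]] .
  moreover have "isolated M' A C kappa"
    using one_step_simp_minimal_A_C [OF assms(1,3,5)] kappa_maximal
    unfolding isolated_def double_maximal_def by blast
  moreover have "kappa \<notin> {alpha M, gamma M}"
  proof -
    have "minimal M A C (alpha M)" "minimal M A C (gamma M)"
      using assms(2) gasket_minimal_A_C_alpha [OF assms(1)]
      unfolding gamma_isolated_condition_def isolated_def by auto
    then show ?thesis
      using assms(3) by (auto simp: minimal_def prec_def)
  qed
  ultimately show ?thesis
    by blast
qed

end
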